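(* Let $f,g:(\mathbb{R}^n,0)\to(\mathbb{R}^p,0)$ be $C^\infty$ map-germs, $s:(\mathbb{R}^n,0)\to(\mathbb{R}^n,0)$ a germ of $C^\infty$ diffeomorphism and $M:(\mathbb{R}^n,0)\to(GL(p,\mathbb{R}),M(0))$ a $C^\infty$ map-germ with $f(x)=M(x)g(s(x))$. Let $F(x,\lambda)=f(x)-M(x)\lambda$ on $(\mathbb{R}^n\times\mathbb{R}^p_\lambda,(0,0))$ with values in $(\mathbb{R}^p_y,0)$, and suppose there are germs of bi-Lipschitz homeomorphisms $h(x,\lambda)=(h_1(x,\lambda),\lambda)$ of $(\mathbb{R}^n\times\mathbb{R}^p_\lambda,(0,0))$ and $H(y,\lambda)=(H_1(y,\lambda),\lambda)$ of $(\mathbb{R}^p_y\times\mathbb{R}^p_\lambda,(0,0))$ such that $H\circ(F,\pi)=(f,\pi)\circ h$, where $\pi(x,\lambda)=\lambda$. If the map-germ $(\mathbb{R}^p_\lambda,0)\to(\mathbb{R}^p_y,0)$, $\lambda\mapsto H_1(0,\lambda)$, is a germ of bi-Lipschitz homeomorphism, then the map-germ $(\mathbb{R}^n,0)\to(\mathbb{R}^n,0)$, $x\mapsto h_1(x,g(s(x)))$, is a germ of bi-Lipschitz homeomorphism.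
   Context: $\mathbb{R}^p_\lambda$ and $\mathbb{R}^p_y$ both denote $\mathbb{R}^p$, playing the role of parameter space and target space respectively. A bi-Lipschitz homeomorphism is a homeomorphism which is Lipschitz (i.e. $\|\varphi(x)-\varphi(y)\|\le c\|x-y\|$ for some $c>0$) and whose inverse is Lipschitz. *)

theory Defs
  imports "HOL-Analysis.Analysis"
begin

fun dderiv :: "'a list \<Rightarrow> ('a::real_normed_vector \<Rightarrow> 'b::real_normed_vector) \<Rightarrow> 'a \<Rightarrow> 'b" where
  "dderiv [] f = f"
| "dderiv (v # vs) f = (\<lambda>x. frechet_derivative (dderiv vs f) (at x) v)"

definition smooth_on :: "'a::real_normed_vector set \<Rightarrow> ('a \<Rightarrow> 'b::real_normed_vector) \<Rightarrow> bool" where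
  "smooth_on U f \<longleftrightarrow> (\<forall>vs. dderiv vs f differentiable_on U)"

definition smooth_germ :: "('a::real_normed_vector \<Rightarrow> 'b::real_normed_vector) \<Rightarrow> 'a \<Rightarrow> bool" where
  "smooth_germ f a \<longleftrightarrow> (\<exists>U. open U \<and> a \<in> U \<and> smooth_on U f)"

definition diffeo_germ :: "('a::real_normed_vector \<Rightarrow> 'b::real_normed_vector) \<Rightarrow> 'a \<Rightarrow> 'b \<Rightarrow> bool" where
  "diffeo_germ s a b \<longleftrightarrow> s a = b \<and>
     (\<exists>U V t. open U \<and> a \<in> U \<and> open V \<and> homeomorphism U V s t \<and> smooth_on U s \<and> smooth_on V t)"

definition bilip_germ :: "('a::metric_space \<Rightarrow> 'b::metric_space) \<Rightarrow> 'a \<Rightarrow> 'b \<Rightarrow> bool" where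
  "bilip_germ \<phi> a b \<longleftrightarrow> \<phi> a = b \<and>
     (\<exists>U V \<psi> C D. open U \<and> a \<in> U \<and> open V \<and> homeomorphism U V \<phi> \<psi> \<and>
        C-lipschitz_on U \<phi> \<and> D-lipschitz_on V \<psi>)"

end

theory Submission
  imports Defs
begin

text \<open>
  Put \<open>\<Phi> x = h\<^sub>1(x, g(s x))\<close> and \<open>\<Psi> y = fst (h\<^sup>-\<^sup>1 (y, G (f y)))\<close>, where
  \<open>G\<close> inverts \<open>\<lambda> \<mapsto> H\<^sub>1(0, \<lambda>)\<close>. Both are compositions of germs that are Lipschitz at the
  origin. On the graph \<open>\<lambda> = g(s x)\<close> we have \<open>F(x, \<lambda>) = 0\<close>, so the conjugacy gives
  \<open>f(\<Phi> x) = H\<^sub>1(0, g(s x))\<close>, whence \<open>\<Psi> \<circ> \<Phi> = id\<close>. Conversely, if \<open>(x, \<lambda>) = h\<^sup>-\<^sup>1(y, G (f y))\<close>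
  then \<open>H(F(x, \<lambda>), \<lambda>) = H(0, \<lambda>)\<close>; injectivity of \<open>H\<close> and invertibility of \<open>M x\<close> force
  \<open>\<lambda> = g(s x)\<close>, i.e. \<open>\<Phi> \<circ> \<Psi> = id\<close>.
\<close>

definition lipschitz_at :: "('a::metric_space \<Rightarrow> 'b::metric_space) \<Rightarrow> 'a \<Rightarrow> bool" where
  "lipschitz_at f a \<longleftrightarrow> (\<exists>r>0. \<exists>C. C-lipschitz_on (ball a r) f)"

lemma continuous_partials_imp_lipschitz_at:
  fixes f :: "'a::euclidean_space \<Rightarrow> 'b::real_normed_vector"
  assumes "open U" "a \<in> U" "f differentiable_on U"
    and partials: "\<And>b. b \<in> Basis \<Longrightarrow> continuous_on U (\<lambda>x. frechet_derivative f (at x) b)"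
  shows "lipschitz_at f a"
proof -
  obtain r where r: "r > 0" "cball a r \<subseteq> U" using assms(1,2) open_contains_cball by blast
  define N where "N x = (\<Sum>b\<in>Basis. norm (frechet_derivative f (at x) b))" for x
  have "continuous_on (cball a r) N"
    unfolding N_def
    by (intro continuous_on_sum continuous_on_norm continuous_on_subset[OF partials r(2)])
  moreover have "cball a r \<noteq> {}" using r(1) by simp
  ultimately obtain x0 where N: "\<And>x. x \<in> cball a r \<Longrightarrow> N x \<le> N x0"
    using continuous_attains_sup[OF compact_cball] by metis
  have deriv: "(f has_derivative frechet_derivative f (at x)) (at x)" if "x \<in> cball a r" for x
    using assms(1,3) r(2) that
    by (meson differentiable_on_eq_differentiable_at frechet_derivative_works subsetD)
  have "(N x0)-lipschitz_on (cball a r) f"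
  proof (rule bounded_derivative_imp_lipschitz)
    show "(f has_derivative frechet_derivative f (at x)) (at x within cball a r)"
      if "x \<in> cball a r" for x
      using deriv[OF that] by (rule has_derivative_at_withinI)
    show "onorm (frechet_derivative f (at x)) \<le> N x0" if "x \<in> cball a r" for x
      using onorm_componentwise[OF has_derivative_bounded_linear[OF deriv[OF that]]] N[OF that]
      unfolding N_def by linarith
    show "0 \<le> N x0" unfolding N_def by (simp add: sum_nonneg)
  qed simp
  then show ?thesis
    using lipschitz_on_subset[OF _ ball_subset_cball] r(1) unfolding lipschitz_at_def by blast
qed

lemma lipschitz_at_imp_isCont: "lipschitz_at f a \<Longrightarrow> isCont f a"
  unfolding lipschitz_at_def
  by (meson centre_in_ball continuous_on_eq_continuous_at lipschitz_on_continuous_on open_ball)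

lemma lipschitz_at_compose:
  assumes f: "lipschitz_at f a" and g: "lipschitz_at g (f a)"
  shows "lipschitz_at (\<lambda>x. g (f x)) a"
proof -
  obtain r C where r: "r > 0" "C-lipschitz_on (ball a r) f" using f unfolding lipschitz_at_def by blast
  obtain r' D where r': "r' > 0" "D-lipschitz_on (ball (f a) r') g"
    using g unfolding lipschitz_at_def by blast
  obtain d where d: "d > 0" "\<And>x. dist x a < d \<Longrightarrow> dist (f x) (f a) < r'"
    using lipschitz_at_imp_isCont[OF f] r'(1) unfolding continuous_at_eps_delta by blast
  define e where "e = min d r"
  have "f ` ball a e \<subseteq> ball (f a) r'" using d by (auto simp: e_def dist_commute)
  then have "(D * C)-lipschitz_on (ball a e) (\<lambda>x. g (f x))"
    using r r' by (intro lipschitz_on_compose2) (auto simp: e_def intro: lipschitz_on_subset)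
  moreover have "e > 0" using d(1) r(1) by (simp add: e_def)
  ultimately show ?thesis unfolding lipschitz_at_def by blast
qed

lemma lipschitz_at_Pair:
  assumes "lipschitz_at f a" "lipschitz_at g a"
  shows "lipschitz_at (\<lambda>x. (f x, g x)) a"
proof -
  obtain r C r' D where "r > 0" "C-lipschitz_on (ball a r) f" "r' > 0" "D-lipschitz_on (ball a r') g"
    using assms unfolding lipschitz_at_def by blast
  then have "min r r' > 0" "(sqrt (C\<^sup>2 + D\<^sup>2))-lipschitz_on (ball a (min r r')) (\<lambda>x. (f x, g x))"
    by (auto intro!: lipschitz_on_Pair elim!: lipschitz_on_subset)
  then show ?thesis unfolding lipschitz_at_def by blast
qed

lemma lipschitz_at_ident: "lipschitz_at (\<lambda>x. x) a"
  unfolding lipschitz_at_def by (blast intro: lipschitz_on_id zero_less_one)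

lemma lipschitz_at_fst: "lipschitz_at fst a"
proof -
  have "1-lipschitz_on (ball a 1) fst" by (rule lipschitz_onI) (simp_all add: dist_fst_le)
  then show ?thesis unfolding lipschitz_at_def by (blast intro: zero_less_one)
qed

lemma bilip_germ_iff_local_inverse:
  "bilip_germ \<phi> a b \<longleftrightarrow> \<phi> a = b \<and> (\<exists>\<psi>. \<psi> b = a \<and> lipschitz_at \<phi> a \<and> lipschitz_at \<psi> b \<and>
     (\<forall>\<^sub>F x in nhds a. \<psi> (\<phi> x) = x) \<and> (\<forall>\<^sub>F y in nhds b. \<phi> (\<psi> y) = y))"
  (is "_ \<longleftrightarrow> _ \<and> (\<exists>\<psi>. ?inverse \<psi>)")
proof
  assume "bilip_germ \<phi> a b"
  then obtain U V \<psi> C D where "\<phi> a = b" "open U" "a \<in> U" "open V"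
    and hom: "homeomorphism U V \<phi> \<psi>" and lip: "C-lipschitz_on U \<phi>" "D-lipschitz_on V \<psi>"
    unfolding bilip_germ_def by blast
  have "b \<in> V" "\<psi> b = a"
    using homeomorphism_image1[OF hom] homeomorphism_apply1[OF hom] \<open>a \<in> U\<close> \<open>\<phi> a = b\<close> by auto
  obtain r r' where "r > 0" "ball a r \<subseteq> U" "r' > 0" "ball b r' \<subseteq> V"
    using \<open>open U\<close> \<open>a \<in> U\<close> \<open>open V\<close> \<open>b \<in> V\<close> openE by metis
  then have "lipschitz_at \<phi> a" "lipschitz_at \<psi> b"
    unfolding lipschitz_at_def using lipschitz_on_subset[OF lip(1)] lipschitz_on_subset[OF lip(2)]
    by blast+
  moreover have "\<forall>\<^sub>F x in nhds a. \<psi> (\<phi> x) = x" "\<forall>\<^sub>F y in nhds b. \<phi> (\<psi> y) = y"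
    unfolding eventually_nhds
    using \<open>open U\<close> \<open>a \<in> U\<close> \<open>open V\<close> \<open>b \<in> V\<close> homeomorphism_apply1[OF hom] homeomorphism_apply2[OF hom]
    by blast+
  ultimately show "\<phi> a = b \<and> (\<exists>\<psi>. ?inverse \<psi>)" using \<open>\<phi> a = b\<close> \<open>\<psi> b = a\<close> by blast
next
  assume "\<phi> a = b \<and> (\<exists>\<psi>. ?inverse \<psi>)"
  then obtain \<psi> r C r' D S S' where "\<phi> a = b" "\<psi> b = a"
    and lip: "r > 0" "C-lipschitz_on (ball a r) \<phi>" "r' > 0" "D-lipschitz_on (ball b r') \<psi>"
    and S: "open S" "a \<in> S" "\<forall>x\<in>S. \<psi> (\<phi> x) = x"
    and S': "open S'" "b \<in> S'" "\<forall>y\<in>S'. \<phi> (\<psi> y) = y"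
    unfolding lipschitz_at_def eventually_nhds by metis
  define A where "A = ball a r \<inter> S \<inter> \<phi> -` (ball b r' \<inter> S')"
  define B where "B = ball b r' \<inter> S' \<inter> \<psi> -` (ball a r \<inter> S)"
  have cont: "continuous_on (ball a r) \<phi>" "continuous_on (ball b r') \<psi>"
    using lip by (auto intro: lipschitz_on_continuous_on)
  have "open A" "open B"
    unfolding A_def B_def
    by (rule continuous_open_preimage; use S(1) S'(1) cont in \<open>auto intro: continuous_on_subset\<close>)+
  moreover have "a \<in> A" using lip S S' \<open>\<phi> a = b\<close> by (simp add: A_def)
  moreover have "homeomorphism A B \<phi> \<psi>"
    by (rule homeomorphismI) (use S S' cont in \<open>auto simp: A_def B_def intro: continuous_on_subset\<close>)
  moreover have "C-lipschitz_on A \<phi>" "D-lipschitz_on B \<psi>"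
    using lip by (auto simp: A_def B_def intro: lipschitz_on_subset)
  ultimately show "bilip_germ \<phi> a b" unfolding bilip_germ_def using \<open>\<phi> a = b\<close> by blast
qed

lemma eventually_nhds_isCont_compose:
  assumes "isCont w a" "w a = b" "\<forall>\<^sub>F z in nhds b. P z"
  shows "\<forall>\<^sub>F x in nhds a. P (w x)"
  using eventually_compose_filterlim[OF assms(3)] assms(1,2)
  by (metis tendsto_at_iff_tendsto_nhds isCont_def)

lemma isCont_matrix_vector_mult [continuous_intros]:
  fixes M :: "'a::t2_space \<Rightarrow> real^'n^'m" and v :: "'a \<Rightarrow> real^'n"
  assumes "isCont M a" "isCont v a"
  shows "isCont (\<lambda>x. M x *v v x) a"
  using assms unfolding isCont_def matrix_vector_mult_def
  by (auto intro!: tendsto_vec_lambda tendsto_sum tendsto_mult tendsto_vec_nth)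

lemma smooth_on_imp_differentiable_on: "smooth_on U f \<Longrightarrow> f differentiable_on U"
  unfolding smooth_on_def by (metis dderiv.simps(1))

lemma smooth_germ_imp_isCont: "smooth_germ f a \<Longrightarrow> isCont f a"
  unfolding smooth_germ_def
  by (meson smooth_on_imp_differentiable_on differentiable_imp_continuous_on
      continuous_on_eq_continuous_at)

lemma smooth_germ_imp_lipschitz_at:
  fixes f :: "'a::euclidean_space \<Rightarrow> 'b::real_normed_vector"
  assumes "smooth_germ f a"
  shows "lipschitz_at f a"
proof -
  obtain U where U: "open U" "a \<in> U" "smooth_on U f" using assms unfolding smooth_germ_def by blast
  have "continuous_on U (dderiv [b] f)" for b
    using U(3) unfolding smooth_on_def by (blast intro: differentiable_imp_continuous_on)
  then have "continuous_on U (\<lambda>x. frechet_derivative f (at x) b)" for b by simp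
  then show ?thesis
    using U by (intro continuous_partials_imp_lipschitz_at smooth_on_imp_differentiable_on)
qed

lemma diffeo_germ_imp_smooth_germ: "diffeo_germ s a b \<Longrightarrow> smooth_germ s a"
  unfolding diffeo_germ_def smooth_germ_def by blast

text \<open>\<open>k\<close>, \<open>K\<close> and \<open>G\<close> are local inverses of \<open>h\<close>, \<open>H\<close> and \<open>H\<^sub>1(0, \<cdot>)\<close>; of \<open>H\<close> only
  injectivity near the origin is needed, and of \<open>M\<close> only continuity.\<close>

locale fibred_conjugacy =
  fixes f g :: "'a::real_normed_vector \<Rightarrow> real^'p"
    and s :: "'a \<Rightarrow> 'a"
    and M :: "'a \<Rightarrow> real^'p^'p"
    and h1 :: "'a \<Rightarrow> real^'p \<Rightarrow> 'a"
    and H1 :: "real^'p \<Rightarrow> real^'p \<Rightarrow> real^'p"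
    and k :: "'a \<times> (real^'p) \<Rightarrow> 'a \<times> (real^'p)"
    and K :: "(real^'p) \<times> (real^'p) \<Rightarrow> (real^'p) \<times> (real^'p)"
    and G :: "real^'p \<Rightarrow> real^'p"
  assumes f0: "f 0 = 0" and g0: "g 0 = 0" and s0: "s 0 = 0"
    and lipschitz_f: "lipschitz_at f 0"
    and lipschitz_g: "lipschitz_at g 0"
    and lipschitz_s: "lipschitz_at s 0"
    and isCont_M: "isCont M 0"
    and invertible_M: "\<forall>\<^sub>F x in nhds 0. invertible (M x)"
    and fMg: "\<forall>\<^sub>F x in nhds 0. f x = M x *v g (s x)"
    and comm: "\<forall>\<^sub>F z in nhds (0, 0).
                 H1 (f (fst z) - M (fst z) *v snd z) (snd z) = f (h1 (fst z) (snd z))"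
    and k0: "k (0, 0) = (0, 0)"
    and lipschitz_h: "lipschitz_at (\<lambda>(x, l). (h1 x l, l)) (0, 0)"
    and lipschitz_k: "lipschitz_at k (0, 0)"
    and k_h: "\<forall>\<^sub>F z in nhds (0, 0). k ((\<lambda>(x, l). (h1 x l, l)) z) = z"
    and h_k: "\<forall>\<^sub>F z in nhds (0, 0). (\<lambda>(x, l). (h1 x l, l)) (k z) = z"
    and K_H: "\<forall>\<^sub>F z in nhds (0, 0). K ((\<lambda>(y, l). (H1 y l, l)) z) = z"
    and G0: "G 0 = 0"
    and lipschitz_G: "lipschitz_at G 0"
    and G_H1: "\<forall>\<^sub>F l in nhds 0. G (H1 0 l) = l"
    and H1_G: "\<forall>\<^sub>F y in nhds 0. H1 0 (G y) = y"
begin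

lemma h1_0: "h1 0 0 = 0"
  using eventually_nhds_x_imp_x[OF h_k] k0 by simp

lemma lipschitz_at_graph_gs: "lipschitz_at (\<lambda>x. (x, g (s x))) 0"
  using lipschitz_at_compose[OF lipschitz_s] lipschitz_g s0
  by (intro lipschitz_at_Pair lipschitz_at_ident) simp

lemma lipschitz_at_h1_on_graph: "lipschitz_at (\<lambda>x. h1 x (g (s x))) 0"
proof -
  have "lipschitz_at (\<lambda>x. (h1 x (g (s x)), g (s x))) 0"
    using lipschitz_at_compose[OF lipschitz_at_graph_gs, of "\<lambda>(x, l). (h1 x l, l)"] lipschitz_h s0 g0
    by simp
  then show ?thesis using lipschitz_at_compose[OF _ lipschitz_at_fst] by fastforce
qed

lemma lipschitz_at_graph_Gf: "lipschitz_at (\<lambda>y. (y, G (f y))) 0"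
  using lipschitz_at_compose[OF lipschitz_f] lipschitz_G f0
  by (intro lipschitz_at_Pair lipschitz_at_ident) simp

lemma lipschitz_at_graph_inverse: "lipschitz_at (\<lambda>y. fst (k (y, G (f y)))) 0"
proof -
  have "lipschitz_at (\<lambda>y. k (y, G (f y))) 0"
    using lipschitz_at_compose[OF lipschitz_at_graph_Gf] lipschitz_k f0 G0 by fastforce
  then show ?thesis using lipschitz_at_compose[OF _ lipschitz_at_fst] by fastforce
qed

lemma graph_inverse_h1_on_graph:
  "\<forall>\<^sub>F x in nhds 0. fst (k (h1 x (g (s x)), G (f (h1 x (g (s x)))))) = x"
proof -
  have cont_graph_gs: "isCont (\<lambda>x. (x, g (s x))) 0"
    by (rule lipschitz_at_imp_isCont[OF lipschitz_at_graph_gs])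
  have "isCont (\<lambda>x. g (s x)) 0"
    using isCont_o2 lipschitz_at_imp_isCont lipschitz_s lipschitz_g s0 by metis
  then have "\<forall>\<^sub>F x in nhds 0. G (H1 0 (g (s x))) = g (s x)"
    using s0 g0 by (intro eventually_nhds_isCont_compose[OF _ _ G_H1]) simp_all
  moreover have "\<forall>\<^sub>F x in nhds 0. k (h1 x (g (s x)), g (s x)) = (x, g (s x))"
    using eventually_nhds_isCont_compose[OF cont_graph_gs _ k_h] s0 g0 by simp
  moreover have "\<forall>\<^sub>F x in nhds 0. H1 (f x - M x *v g (s x)) (g (s x)) = f (h1 x (g (s x)))"
    using eventually_nhds_isCont_compose[OF cont_graph_gs _ comm] s0 g0 by simp
  ultimately show ?thesis
    using fMg by eventually_elim (metis diff_self fst_conv)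
qed

lemma h1_on_graph_graph_inverse:
  "\<forall>\<^sub>F y in nhds 0. h1 (fst (k (y, G (f y)))) (g (s (fst (k (y, G (f y)))))) = y"
proof -
  define w where "w y = k (y, G (f y))" for y
  have cont_graph_Gf: "isCont (\<lambda>y. (y, G (f y))) 0"
    by (rule lipschitz_at_imp_isCont[OF lipschitz_at_graph_Gf])
  have cont_w: "isCont w 0"
    unfolding w_def using isCont_o2[OF cont_graph_Gf, of k] lipschitz_at_imp_isCont[OF lipschitz_k] f0 G0
    by simp
  have w0: "w 0 = (0, 0)" by (simp add: w_def f0 G0 k0)
  have cont_x: "isCont (\<lambda>y. fst (w y)) 0"
    using cont_w by (intro continuous_intros)
  have cont_f: "isCont f 0" by (rule lipschitz_at_imp_isCont[OF lipschitz_f])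
  have cont_fx: "isCont (\<lambda>y. f (fst (w y))) 0"
    using isCont_o2[OF cont_x, of f] cont_f w0 by simp
  have cont_Mx: "isCont (\<lambda>y. M (fst (w y))) 0"
    using isCont_o2[OF cont_x, of M] isCont_M w0 by simp
  have cont_H_arg: "isCont (\<lambda>y. (f (fst (w y)) - M (fst (w y)) *v snd (w y), snd (w y))) 0"
    using cont_fx cont_Mx cont_w by (intro continuous_intros)
  have "\<forall>\<^sub>F y in nhds 0. (\<lambda>(x, l). (h1 x l, l)) (w y) = (y, G (f y))"
    using eventually_nhds_isCont_compose[OF cont_graph_Gf _ h_k] f0 G0 by (simp add: w_def)
  moreover have "\<forall>\<^sub>F y in nhds 0. H1 0 (G (f y)) = f y"
    using f0 by (intro eventually_nhds_isCont_compose[OF cont_f _ H1_G])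
  moreover have "\<forall>\<^sub>F y in nhds 0.
      H1 (f (fst (w y)) - M (fst (w y)) *v snd (w y)) (snd (w y)) = f (h1 (fst (w y)) (snd (w y)))"
    using w0 by (intro eventually_nhds_isCont_compose[OF cont_w _ comm])
  moreover have "\<forall>\<^sub>F y in nhds 0. f (fst (w y)) = M (fst (w y)) *v g (s (fst (w y)))"
    using w0 by (intro eventually_nhds_isCont_compose[OF cont_x _ fMg]) simp
  moreover have "\<forall>\<^sub>F y in nhds 0. invertible (M (fst (w y)))"
    using w0 by (intro eventually_nhds_isCont_compose[OF cont_x _ invertible_M]) simp
  moreover have "\<forall>\<^sub>F y in nhds 0.
      K (H1 (f (fst (w y)) - M (fst (w y)) *v snd (w y)) (snd (w y)), snd (w y))
        = (f (fst (w y)) - M (fst (w y)) *v snd (w y), snd (w y))"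
    using w0 f0 eventually_nhds_isCont_compose[OF cont_H_arg _ K_H] by simp
  moreover have "\<forall>\<^sub>F y in nhds 0. K (H1 0 (snd (w y)), snd (w y)) = (0, snd (w y))"
  proof -
    have cont_0l: "isCont (\<lambda>y. (0 :: real^'p, snd (w y))) 0" using cont_w by (intro continuous_intros)
    show ?thesis using eventually_nhds_isCont_compose[OF cont_0l _ K_H] w0 by simp
  qed
  ultimately have "\<forall>\<^sub>F y in nhds 0. h1 (fst (w y)) (g (s (fst (w y)))) = y"
    \<comment> \<open>\<open>K\<close> cancels \<open>H\<close> at both points, so \<open>F(x, l) = 0\<close>; then \<open>M x\<close> cancels.\<close>
  proof eventually_elim
    case (elim y)
    obtain x l where w: "w y = (x, l)" by fastforce
    have hx: "h1 x l = y" and l: "l = G (f y)" using elim(1) w by auto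
    have "(f x - M x *v l, l) = K (H1 (f x - M x *v l) l, l)" using elim(6) w by simp
    also have "\<dots> = K (H1 0 l, l)" using elim(2,3) w hx l by simp
    also have "\<dots> = (0, l)" using elim(7) w by simp
    finally have "M x *v l = M x *v g (s x)" using elim(4) w by simp
    then have "l = g (s x)"
      using elim(5) w by (metis fst_conv invertible_def matrix_left_invertible_injective injD)
    then show ?case using w hx by simp
  qed
  then show ?thesis by (simp add: w_def)
qed

lemma bilip_germ_h1_on_graph: "bilip_germ (\<lambda>x. h1 x (g (s x))) 0 0"
  unfolding bilip_germ_iff_local_inverse
  using lipschitz_at_h1_on_graph lipschitz_at_graph_inverse graph_inverse_h1_on_graph
    h1_on_graph_graph_inverse
  by (intro conjI exI[of _ "\<lambda>y. fst (k (y, G (f y)))"]) (simp_all add: h1_0 s0 g0 f0 G0 k0)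

end

theorem lemma3p3:
  fixes f g :: "real^'n \<Rightarrow> real^'p"
    and s :: "real^'n \<Rightarrow> real^'n"
    and M :: "real^'n \<Rightarrow> real^'p^'p"
    and h1 :: "real^'n \<Rightarrow> real^'p \<Rightarrow> real^'n"
    and H1 :: "real^'p \<Rightarrow> real^'p \<Rightarrow> real^'p"
  assumes f: "smooth_germ f 0" "f 0 = 0"
    and g: "smooth_germ g 0" "g 0 = 0"
    and s: "diffeo_germ s 0 0"
    and M: "smooth_germ M 0" "\<forall>\<^sub>F x in nhds 0. invertible (M x)"
    and fMg: "\<forall>\<^sub>F x in nhds 0. f x = M x *v g (s x)"
    and h: "bilip_germ (\<lambda>(x, l). (h1 x l, l)) (0, 0) (0, 0)"
    and H: "bilip_germ (\<lambda>(y, l). (H1 y l, l)) (0, 0) (0, 0)"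
    and comm: "\<forall>\<^sub>F z in nhds (0, 0).
                 H1 (f (fst z) - M (fst z) *v snd z) (snd z) = f (h1 (fst z) (snd z))"
    and H0: "bilip_germ (\<lambda>l. H1 0 l) 0 0"
  shows "bilip_germ (\<lambda>x. h1 x (g (s x))) 0 0"
proof -
  obtain k where k: "k (0, 0) = (0, 0)" "lipschitz_at (\<lambda>(x, l). (h1 x l, l)) (0, 0)"
    "lipschitz_at k (0, 0)" "\<forall>\<^sub>F z in nhds (0, 0). k ((\<lambda>(x, l). (h1 x l, l)) z) = z"
    "\<forall>\<^sub>F z in nhds (0, 0). (\<lambda>(x, l). (h1 x l, l)) (k z) = z"
    using h unfolding bilip_germ_iff_local_inverse by blast
  obtain K where K: "\<forall>\<^sub>F z in nhds (0, 0). K ((\<lambda>(y, l). (H1 y l, l)) z) = z"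
    using H unfolding bilip_germ_iff_local_inverse by blast
  obtain G where G: "G 0 = 0" "lipschitz_at G 0"
    "\<forall>\<^sub>F l in nhds 0. G (H1 0 l) = l" "\<forall>\<^sub>F y in nhds 0. H1 0 (G y) = y"
    using H0 unfolding bilip_germ_iff_local_inverse by blast
  have s0: "s 0 = 0" using s unfolding diffeo_germ_def by blast
  have lip: "lipschitz_at f 0" "lipschitz_at g 0" "lipschitz_at s 0"
    using smooth_germ_imp_lipschitz_at f(1) g(1) diffeo_germ_imp_smooth_germ[OF s] by blast+
  interpret fibred_conjugacy f g s M h1 H1 k K G
    using f(2) g(2) s0 lip smooth_germ_imp_isCont[OF M(1)] M(2) fMg comm k K G
    by unfold_locales
  show ?thesis by (rule bilip_germ_h1_on_graph)
qed

end
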